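(* For GCWN networks $M,M',N$ and any label $\delta$ (either $p:\alpha$ or $\tau$), if $M\xrightarrow{\delta}M'$ and $M\equiv N$, then there exists $N'$ such that $N\xrightarrow{\delta}N'$ and $M'\equiv N'$.
   Context: GCWN syntax. Fix a countable set ${\sf Loc}$ of locations, channel names $c,d,\dots$ with co-names $\overline{c}$, variables, values $v$ (not channels), expressions $e$, boolean expressions $b$, and an evaluation ${\sf eval}$ on variable-free expressions. A finite graph $G=(|G|,\frown_G)$ has a finite vertex set $|G|\subseteq{\sf Loc}$ and a symmetric irreflexive edge relation. For disjoint $G,H$ and $D\subseteq|G|\times|H|$, $G\oplus_D H$ has vertices $|G|\cup|H|$ and edges those of $G$, those of $H$ and (symmetrically) the pairs in $D$. Processes: $P::={\bf 0}\mid c(x).P\mid\overline{c}(e).P\mid P+Q\mid{\bf if}~b~{\bf then}~P~{\bf else}~Q\mid A(\vec v)$ with process constants defined by $A(\vec x)\stackrel{\rm def}{=}P$. Networks: $M::=G\langle\Phi\rangle\mid M\backslash c\mid M\oplus_D N$ with $\Phi:|G|\to$ processes; every network is of the form $G\langle\Phi\rangle\backslash I$, and for $M=G\langle\Phi\rangle\backslash I$, $N=H\langle\Psi\rangle\backslash J$ (disjoint locations, $I\cap J=\emptyset$), $M\oplus_D N=(G\oplus_D H)\langle\Phi\cup\Psi\rangle\backslash(I\cup J)$. Write $|M|=|G|$, $M(p)=\Phi(p)$, $\frown_M=\frown_G$, $M[p\mapsto Q]$ for replacing the process at $p$ by $Q$. Networks are data-closed. Structural congruence $\equiv$: least congruence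 with $P+{\bf 0}\equiv P$, $P+Q\equiv Q+P$, $P+(Q+R)\equiv(P+Q)+R$, conditionals equal to the branch selected by ${\sf eval}(b)$, $A(\vec v)\equiv P\{\vec v/\vec x\}$ for $A(\vec x)\stackrel{\rm def}{=}P$, $\alpha$-conversion of restricted channels, $M\backslash c\backslash d\equiv M\backslash d\backslash c$, $M\oplus_D N\equiv N\oplus_D M$, $(M\oplus_D N)\backslash c\equiv M\oplus_D(N\backslash c)$ if $c,\overline c$ not in $M$, and $G\langle\Phi\rangle\equiv G\langle\Psi\rangle$ if $\Phi(p)\equiv\Psi(p)$ for all $p$. Labelled transitions. Actions $\alpha::=cv\mid\overline{c}v$. Processes: $\overline{c}(e).P\xrightarrow{\overline{c}v}P$ if ${\sf eval}(e)=v$; $c(x).P\xrightarrow{cv}P\{v/x\}$; $P+Q$ does any transition of $P$ or of $Q$; ${\bf if}~b~{\bf then}~P~{\bf else}~Q$ does the transitions of $P$ if ${\sf eval}(b)=true$, of $Q$ if $false$; $A(\vec v)$ does the transitions of $P\{\vec v/\vec x\}$ where $A(\vec x)\stackrel{\rm def}{=}P$. Networks, labels $\delta::=p:\alpha\mid\tau$: (N-Send) if $p\in|M|$ and $M(p)\xrightarrow{\overline cv}P'$ then $M\xrightarrow{p:\overline cv}M[p\mapsto P']$; (N-Recv) if $p\in|M|$ and $M(p)\xrightarrow{cv}P'$ then $M\xrightarrow{p:cv}M[p\mapsto P']$; (N-Bcast) if $M\xrightarrow{p:\overline cv}M'$, $N\xrightarrow{q:cv}N'$ and $(p,q)\in D$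 then $M\oplus_D N\xrightarrow{p:\overline cv}M'\oplus_D N'$ and $N\oplus_D M\xrightarrow{p:\overline cv}N'\oplus_D M'$; (N-Res1) $M\xrightarrow{p:\overline cv}M'$ implies $M\backslash c\xrightarrow{\tau}M'\backslash c$; (N-Res2) $M\xrightarrow{\delta}M'$ with $c,\overline c$ not in $\delta$ implies $M\backslash c\xrightarrow{\delta}M'\backslash c$; (N-ParL/R) $M\xrightarrow{\delta}M'$ implies $M\oplus_D N\xrightarrow{\delta}M'\oplus_D N$, and $N\xrightarrow{\delta}N'$ implies $M\oplus_D N\xrightarrow{\delta}M\oplus_D N'$. *)

theory Defs
  imports Main "HOL-Library.Countable"
begin

text \<open>Type parameters: 'l locations (countable), 'c channel names, 'v values,
  'e (closed) expressions, 'b (closed) boolean expressions, 'k process-constant names.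
  Input binders are represented higher-order (c(x).P as PRecv c (\<lambda>v. P{v/x})),
  so all processes are data-closed by construction.\<close>

datatype ('c,'v,'e,'b,'k) proc =
    PNil
  | PRecv 'c "'v \<Rightarrow> ('c,'v,'e,'b,'k) proc"
  | PSend 'c 'e "('c,'v,'e,'b,'k) proc"
  | PSum "('c,'v,'e,'b,'k) proc" "('c,'v,'e,'b,'k) proc"
  | PIf 'b "('c,'v,'e,'b,'k) proc" "('c,'v,'e,'b,'k) proc"
  | PCall 'k "'v list"

text \<open>Networks: G<Phi> (vertex set, edge relation, process assignment), M\c, M (+)_D N.\<close>
datatype ('l,'c,'v,'e,'b,'k) net =
    NLeaf "'l set" "('l \<times> 'l) set" "'l \<Rightarrow> ('c,'v,'e,'b,'k) proc"
  | NRes 'c "('l,'c,'v,'e,'b,'k) net"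
  | NPar "('l,'c,'v,'e,'b,'k) net" "('l \<times> 'l) set" "('l,'c,'v,'e,'b,'k) net"

datatype ('c,'v) act = AIn 'c 'v | AOut 'c 'v

datatype ('l,'c,'v) lab = LIn 'l 'c 'v | LOut 'l 'c 'v | Tau

type_synonym ('c,'v,'e,'b,'k) cdefs = "'k \<Rightarrow> 'v list \<Rightarrow> ('c,'v,'e,'b,'k) proc"

primrec locs :: "('l,'c,'v,'e,'b,'k) net \<Rightarrow> 'l set" where
  "locs (NLeaf V E \<Phi>) = V"
| "locs (NRes c M) = locs M"
| "locs (NPar M D N) = locs M \<union> locs N"

text \<open>Well-formed networks (finite simple graphs, disjoint locations, D between the two parts;
  D is read as a set of undirected edges).\<close>
primrec wf_net :: "('l,'c,'v,'e,'b,'k) net \<Rightarrow> bool" where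
  "wf_net (NLeaf V E \<Phi>) \<longleftrightarrow> finite V \<and> E \<subseteq> V \<times> V \<and> (\<forall>x y. (x,y) \<in> E \<longrightarrow> (y,x) \<in> E)
       \<and> (\<forall>x. (x,x) \<notin> E)"
| "wf_net (NRes c M) \<longleftrightarrow> wf_net M"
| "wf_net (NPar M D N) \<longleftrightarrow> wf_net M \<and> wf_net N \<and> locs M \<inter> locs N = {}
       \<and> D \<subseteq> (locs M \<times> locs N) \<union> (locs N \<times> locs M)"

inductive pocc :: "('c,'v,'e,'b,'k) cdefs \<Rightarrow> 'c \<Rightarrow> ('c,'v,'e,'b,'k) proc \<Rightarrow> bool"
  for defs where
  "pocc defs c (PRecv c f)"
| "pocc defs c (f v) \<Longrightarrow> pocc defs c (PRecv a f)"
| "pocc defs c (PSend c e P)"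
| "pocc defs c P \<Longrightarrow> pocc defs c (PSend a e P)"
| "pocc defs c P \<Longrightarrow> pocc defs c (PSum P Q)"
| "pocc defs c Q \<Longrightarrow> pocc defs c (PSum P Q)"
| "pocc defs c P \<Longrightarrow> pocc defs c (PIf b P Q)"
| "pocc defs c Q \<Longrightarrow> pocc defs c (PIf b P Q)"
| "pocc defs c (defs A vs) \<Longrightarrow> pocc defs c (PCall A vs)"

inductive pcallocc :: "('c,'v,'e,'b,'k) cdefs \<Rightarrow> 'c \<Rightarrow> ('c,'v,'e,'b,'k) proc \<Rightarrow> bool"
  for defs where
  "pocc defs c (PCall A vs) \<Longrightarrow> pcallocc defs c (PCall A vs)"
| "pcallocc defs c (f v) \<Longrightarrow> pcallocc defs c (PRecv a f)"
| "pcallocc defs c P \<Longrightarrow> pcallocc defs c (PSend a e P)"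
| "pcallocc defs c P \<Longrightarrow> pcallocc defs c (PSum P Q)"
| "pcallocc defs c Q \<Longrightarrow> pcallocc defs c (PSum P Q)"
| "pcallocc defs c P \<Longrightarrow> pcallocc defs c (PIf b P Q)"
| "pcallocc defs c Q \<Longrightarrow> pcallocc defs c (PIf b P Q)"

primrec nfree :: "('c,'v,'e,'b,'k) cdefs \<Rightarrow> 'c \<Rightarrow> ('l,'c,'v,'e,'b,'k) net \<Rightarrow> bool" where
  "nfree defs c (NLeaf V E \<Phi>) \<longleftrightarrow> (\<exists>p\<in>V. pocc defs c (\<Phi> p))"
| "nfree defs c (NRes a M) \<longleftrightarrow> a \<noteq> c \<and> nfree defs c M"
| "nfree defs c (NPar M D N) \<longleftrightarrow> nfree defs c M \<or> nfree defs c N"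

primrec nocc :: "('c,'v,'e,'b,'k) cdefs \<Rightarrow> 'c \<Rightarrow> ('l,'c,'v,'e,'b,'k) net \<Rightarrow> bool" where
  "nocc defs c (NLeaf V E \<Phi>) \<longleftrightarrow> (\<exists>p\<in>V. pocc defs c (\<Phi> p))"
| "nocc defs c (NRes a M) \<longleftrightarrow> a = c \<or> nocc defs c M"
| "nocc defs c (NPar M D N) \<longleftrightarrow> nocc defs c M \<or> nocc defs c N"

primrec ncallocc :: "('c,'v,'e,'b,'k) cdefs \<Rightarrow> 'c \<Rightarrow> ('l,'c,'v,'e,'b,'k) net \<Rightarrow> bool" where
  "ncallocc defs c (NLeaf V E \<Phi>) \<longleftrightarrow> (\<exists>p\<in>V. pcallocc defs c (\<Phi> p))"
| "ncallocc defs c (NRes a M) \<longleftrightarrow> a \<noteq> c \<and> ncallocc defs c M"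
| "ncallocc defs c (NPar M D N) \<longleftrightarrow> ncallocc defs c M \<or> ncallocc defs c N"

text \<open>Renaming channel c to d (P{d/c}); constant calls are left untouched, which is
  only used when c does not occur in any call.\<close>
primrec pren :: "'c \<Rightarrow> 'c \<Rightarrow> ('c,'v,'e,'b,'k) proc \<Rightarrow> ('c,'v,'e,'b,'k) proc" where
  "pren c d PNil = PNil"
| "pren c d (PRecv a f) = PRecv (if a = c then d else a) (\<lambda>v. pren c d (f v))"
| "pren c d (PSend a e P) = PSend (if a = c then d else a) e (pren c d P)"
| "pren c d (PSum P Q) = PSum (pren c d P) (pren c d Q)"
| "pren c d (PIf b P Q) = PIf b (pren c d P) (pren c d Q)"
| "pren c d (PCall A vs) = PCall A vs"

primrec nren :: "'c \<Rightarrow> 'c \<Rightarrow> ('l,'c,'v,'e,'b,'k) net \<Rightarrow> ('l,'c,'v,'e,'b,'k) net" where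
  "nren c d (NLeaf V E \<Phi>) = NLeaf V E (\<lambda>p. pren c d (\<Phi> p))"
| "nren c d (NRes a M) = (if a = c then NRes a M else NRes a (nren c d M))"
| "nren c d (NPar M D N) = NPar (nren c d M) D (nren c d N)"

inductive pcong :: "('b \<Rightarrow> bool) \<Rightarrow> ('c,'v,'e,'b,'k) cdefs
    \<Rightarrow> ('c,'v,'e,'b,'k) proc \<Rightarrow> ('c,'v,'e,'b,'k) proc \<Rightarrow> bool"
  for evalb defs where
  prefl: "pcong evalb defs P P"
| psym: "pcong evalb defs P Q \<Longrightarrow> pcong evalb defs Q P"
| ptrans: "pcong evalb defs P Q \<Longrightarrow> pcong evalb defs Q R \<Longrightarrow> pcong evalb defs P R"
| psum_nil: "pcong evalb defs (PSum P PNil) P"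
| psum_comm: "pcong evalb defs (PSum P Q) (PSum Q P)"
| psum_assoc: "pcong evalb defs (PSum P (PSum Q R)) (PSum (PSum P Q) R)"
| pif: "pcong evalb defs (PIf b P Q) (if evalb b then P else Q)"
| pcall: "pcong evalb defs (PCall A vs) (defs A vs)"
| pctx_recv: "(\<And>v. pcong evalb defs (f v) (g v)) \<Longrightarrow> pcong evalb defs (PRecv c f) (PRecv c g)"
| pctx_send: "pcong evalb defs P Q \<Longrightarrow> pcong evalb defs (PSend c e P) (PSend c e Q)"
| pctx_sum: "pcong evalb defs P P' \<Longrightarrow> pcong evalb defs Q Q'
     \<Longrightarrow> pcong evalb defs (PSum P Q) (PSum P' Q')"
| pctx_if: "pcong evalb defs P P' \<Longrightarrow> pcong evalb defs Q Q'
     \<Longrightarrow> pcong evalb defs (PIf b P Q) (PIf b P' Q')"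

inductive ncong :: "('b \<Rightarrow> bool) \<Rightarrow> ('c,'v,'e,'b,'k) cdefs
    \<Rightarrow> ('l,'c,'v,'e,'b,'k) net \<Rightarrow> ('l,'c,'v,'e,'b,'k) net \<Rightarrow> bool"
  for evalb defs where
  nrefl: "ncong evalb defs M M"
| nsym: "ncong evalb defs M N \<Longrightarrow> ncong evalb defs N M"
| ntrans_cong: "ncong evalb defs M N \<Longrightarrow> ncong evalb defs N K \<Longrightarrow> ncong evalb defs M K"
| nalpha: "\<not> nocc defs d M \<Longrightarrow> \<not> ncallocc defs c M
     \<Longrightarrow> ncong evalb defs (NRes c M) (NRes d (nren c d M))"
| nres_comm: "ncong evalb defs (NRes c (NRes d M)) (NRes d (NRes c M))"
| npar_comm: "ncong evalb defs (NPar M D N) (NPar N D M)"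
| nextrude: "\<not> nfree defs c M \<Longrightarrow> ncong evalb defs (NRes c (NPar M D N)) (NPar M D (NRes c N))"
| nctx_leaf: "(\<And>p. p \<in> V \<Longrightarrow> pcong evalb defs (\<Phi> p) (\<Psi> p))
     \<Longrightarrow> ncong evalb defs (NLeaf V E \<Phi>) (NLeaf V E \<Psi>)"
| nctx_res: "ncong evalb defs M N \<Longrightarrow> ncong evalb defs (NRes c M) (NRes c N)"
| nctx_par: "ncong evalb defs M M' \<Longrightarrow> ncong evalb defs N N'
     \<Longrightarrow> ncong evalb defs (NPar M D N) (NPar M' D N')"

inductive ptr :: "('e \<Rightarrow> 'v) \<Rightarrow> ('b \<Rightarrow> bool) \<Rightarrow> ('c,'v,'e,'b,'k) cdefs
    \<Rightarrow> ('c,'v,'e,'b,'k) proc \<Rightarrow> ('c,'v) act \<Rightarrow> ('c,'v,'e,'b,'k) proc \<Rightarrow> bool"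
  for eval evalb defs where
  "eval e = v \<Longrightarrow> ptr eval evalb defs (PSend c e P) (AOut c v) P"
| "ptr eval evalb defs (PRecv c f) (AIn c v) (f v)"
| "ptr eval evalb defs P \<alpha> P' \<Longrightarrow> ptr eval evalb defs (PSum P Q) \<alpha> P'"
| "ptr eval evalb defs Q \<alpha> Q' \<Longrightarrow> ptr eval evalb defs (PSum P Q) \<alpha> Q'"
| "evalb b \<Longrightarrow> ptr eval evalb defs P \<alpha> P' \<Longrightarrow> ptr eval evalb defs (PIf b P Q) \<alpha> P'"
| "\<not> evalb b \<Longrightarrow> ptr eval evalb defs Q \<alpha> Q' \<Longrightarrow> ptr eval evalb defs (PIf b P Q) \<alpha> Q'"
| "ptr eval evalb defs (defs A vs) \<alpha> P' \<Longrightarrow> ptr eval evalb defs (PCall A vs) \<alpha> P'"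

fun lab_has_chan :: "('l,'c,'v) lab \<Rightarrow> 'c \<Rightarrow> bool" where
  "lab_has_chan (LIn p a v) c = (a = c)"
| "lab_has_chan (LOut p a v) c = (a = c)"
| "lab_has_chan Tau c = False"

inductive ntr :: "('e \<Rightarrow> 'v) \<Rightarrow> ('b \<Rightarrow> bool) \<Rightarrow> ('c,'v,'e,'b,'k) cdefs
    \<Rightarrow> ('l,'c,'v,'e,'b,'k) net \<Rightarrow> ('l,'c,'v) lab \<Rightarrow> ('l,'c,'v,'e,'b,'k) net \<Rightarrow> bool"
  for eval evalb defs where
  n_send: "p \<in> V \<Longrightarrow> ptr eval evalb defs (\<Phi> p) (AOut c v) P'
     \<Longrightarrow> ntr eval evalb defs (NLeaf V E \<Phi>) (LOut p c v) (NLeaf V E (\<Phi>(p := P')))"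
| n_recv: "p \<in> V \<Longrightarrow> ptr eval evalb defs (\<Phi> p) (AIn c v) P'
     \<Longrightarrow> ntr eval evalb defs (NLeaf V E \<Phi>) (LIn p c v) (NLeaf V E (\<Phi>(p := P')))"
| n_bcast1: "ntr eval evalb defs M (LOut p c v) M' \<Longrightarrow> ntr eval evalb defs N (LIn q c v) N'
     \<Longrightarrow> (p,q) \<in> D \<or> (q,p) \<in> D
     \<Longrightarrow> ntr eval evalb defs (NPar M D N) (LOut p c v) (NPar M' D N')"
| n_bcast2: "ntr eval evalb defs M (LOut p c v) M' \<Longrightarrow> ntr eval evalb defs N (LIn q c v) N'
     \<Longrightarrow> (p,q) \<in> D \<or> (q,p) \<in> D
     \<Longrightarrow> ntr eval evalb defs (NPar N D M) (LOut p c v) (NPar N' D M')"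
| n_res1: "ntr eval evalb defs M (LOut p c v) M'
     \<Longrightarrow> ntr eval evalb defs (NRes c M) Tau (NRes c M')"
| n_res2: "ntr eval evalb defs M \<delta> M' \<Longrightarrow> \<not> lab_has_chan \<delta> c
     \<Longrightarrow> ntr eval evalb defs (NRes c M) \<delta> (NRes c M')"
| n_parL: "ntr eval evalb defs M \<delta> M' \<Longrightarrow> ntr eval evalb defs (NPar M D N) \<delta> (NPar M' D N)"
| n_parR: "ntr eval evalb defs N \<delta> N' \<Longrightarrow> ntr eval evalb defs (NPar M D N) \<delta> (NPar M D N')"

end

theory Submission
  imports Defs
begin

text \<open>Structural congruence is contained in the relation ``every transition of one side is
  matched by a transition of the other side with the same label, and the residuals are again
  structurally congruent''. Since this relation is transitive, it suffices to check it in both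
  directions for each axiom and to show that it is preserved by the three network contexts.
  For the axioms, the residual of a transition has the same shape as the original term, so the
  same axiom instance relates the residuals. The only delicate axiom is \<alpha>-conversion, which
  needs that renaming a channel that is fresh and does not occur in constant calls commutes
  with transitions in both directions.\<close>

fun loc_lab :: "'l \<Rightarrow> ('c,'v) act \<Rightarrow> ('l,'c,'v) lab" where
  "loc_lab p (AIn c v) = LIn p c v"
| "loc_lab p (AOut c v) = LOut p c v"

definition cren :: "'c \<Rightarrow> 'c \<Rightarrow> 'c \<Rightarrow> 'c" where
  "cren c d a = (if a = c then d else a)"

fun aren :: "'c \<Rightarrow> 'c \<Rightarrow> ('c,'v) act \<Rightarrow> ('c,'v) act" where
  "aren c d (AIn a v) = AIn (cren c d a) v"
| "aren c d (AOut a v) = AOut (cren c d a) v"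

fun lren :: "'c \<Rightarrow> 'c \<Rightarrow> ('l,'c,'v) lab \<Rightarrow> ('l,'c,'v) lab" where
  "lren c d (LIn p a v) = LIn p (cren c d a) v"
| "lren c d (LOut p a v) = LOut p (cren c d a) v"
| "lren c d Tau = Tau"

lemma cren_inj: "cren c d a1 = cren c d a2 \<Longrightarrow> a1 \<noteq> d \<Longrightarrow> a2 \<noteq> d \<Longrightarrow> a1 = a2"
  by (auto simp: cren_def split: if_splits)

lemma lren_loc_lab [simp]: "lren c d (loc_lab p \<alpha>) = loc_lab p (aren c d \<alpha>)"
  by (cases \<alpha>) auto

lemma lren_eq_iff [simp]:
  "lren c d \<delta> = LOut p a v \<longleftrightarrow> (\<exists>a0. \<delta> = LOut p a0 v \<and> a = cren c d a0)"
  "lren c d \<delta> = LIn p a v \<longleftrightarrow> (\<exists>a0. \<delta> = LIn p a0 v \<and> a = cren c d a0)"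
  "lren c d \<delta> = Tau \<longleftrightarrow> \<delta> = Tau"
  by (cases \<delta>; auto)+

lemma lren_id: "\<not> lab_has_chan \<delta> c \<Longrightarrow> lren c d \<delta> = \<delta>"
  by (cases \<delta>) (auto simp: cren_def)

lemma lab_has_chan_lren: "a \<noteq> c \<Longrightarrow> a \<noteq> d \<Longrightarrow> lab_has_chan (lren c d \<delta>) a = lab_has_chan \<delta> a"
  by (cases \<delta>) (auto simp: cren_def)

inductive_simps pocc_simps [simp]:
  "pocc defs c PNil"
  "pocc defs c (PRecv a f)"
  "pocc defs c (PSend a e P)"
  "pocc defs c (PSum P Q)"
  "pocc defs c (PIf b P Q)"
  "pocc defs c (PCall A vs)"

inductive_simps pcallocc_simps [simp]:
  "pcallocc defs c PNil"
  "pcallocc defs c (PRecv a f)"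
  "pcallocc defs c (PSend a e P)"
  "pcallocc defs c (PSum P Q)"
  "pcallocc defs c (PIf b P Q)"
  "pcallocc defs c (PCall A vs)"

lemma pren_id: "\<not> pocc defs c P \<Longrightarrow> pren c d P = P"
  by (induction P) auto

lemma pren_fun_upd: "(\<lambda>q. pren c d ((\<Phi>(p := P)) q)) = (\<lambda>q. pren c d (\<Phi> q))(p := pren c d P)"
  by auto

lemma pcallocc_pocc: "pcallocc defs a P \<Longrightarrow> pocc defs a P"
  by (induction rule: pcallocc.induct) auto

lemma nfree_nocc: "nfree defs a M \<Longrightarrow> nocc defs a M"
  by (induction M) auto

context
  fixes eval :: "'e \<Rightarrow> 'v" and evalb :: "'b \<Rightarrow> bool" and defs :: "('c,'v,'e,'b,'k) cdefs"
begin

abbreviation ptr_step :: "('c,'v,'e,'b,'k) proc \<Rightarrow> ('c,'v) act \<Rightarrow> ('c,'v,'e,'b,'k) proc \<Rightarrow> bool"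
    (\<open>_ \<midarrow>_\<rightarrow>\<^sub>p _\<close> [51, 0, 51] 50)
  where "P \<midarrow>\<alpha>\<rightarrow>\<^sub>p Q \<equiv> ptr eval evalb defs P \<alpha> Q"

abbreviation ntr_step ::
    "('l,'c,'v,'e,'b,'k) net \<Rightarrow> ('l,'c,'v) lab \<Rightarrow> ('l,'c,'v,'e,'b,'k) net \<Rightarrow> bool"
    (\<open>_ \<midarrow>_\<rightarrow> _\<close> [51, 0, 51] 50)
  where "M \<midarrow>\<delta>\<rightarrow> N \<equiv> ntr eval evalb defs M \<delta> N"

abbreviation pcong_rel :: "('c,'v,'e,'b,'k) proc \<Rightarrow> ('c,'v,'e,'b,'k) proc \<Rightarrow> bool"
    (infix \<open>\<cong>\<^sub>p\<close> 50)
  where "P \<cong>\<^sub>p Q \<equiv> pcong evalb defs P Q"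

abbreviation ncong_rel :: "('l,'c,'v,'e,'b,'k) net \<Rightarrow> ('l,'c,'v,'e,'b,'k) net \<Rightarrow> bool"
    (infix \<open>\<cong>\<close> 50)
  where "M \<cong> N \<equiv> ncong evalb defs M N"

inductive_simps ptr_simps [simp]:
  "PNil \<midarrow>\<alpha>\<rightarrow>\<^sub>p R"
  "PRecv c f \<midarrow>\<alpha>\<rightarrow>\<^sub>p R"
  "PSend c e P \<midarrow>\<alpha>\<rightarrow>\<^sub>p R"
  "PSum P Q \<midarrow>\<alpha>\<rightarrow>\<^sub>p R"
  "PIf b P Q \<midarrow>\<alpha>\<rightarrow>\<^sub>p R"
  "PCall A vs \<midarrow>\<alpha>\<rightarrow>\<^sub>p R"

lemma ntr_NLeafI: "p \<in> V \<Longrightarrow> \<Phi> p \<midarrow>\<alpha>\<rightarrow>\<^sub>p P' \<Longrightarrow> NLeaf V E \<Phi> \<midarrow>loc_lab p \<alpha>\<rightarrow> NLeaf V E (\<Phi>(p := P'))"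
  by (cases \<alpha>) (auto intro: ntr.intros)

lemma ntr_NLeafE [consumes 1]:
  assumes "NLeaf V E \<Phi> \<midarrow>\<delta>\<rightarrow> X"
  obtains p \<alpha> P' where "p \<in> V" "\<Phi> p \<midarrow>\<alpha>\<rightarrow>\<^sub>p P'" "\<delta> = loc_lab p \<alpha>" "X = NLeaf V E (\<Phi>(p := P'))"
  using assms by (cases rule: ntr.cases) (metis loc_lab.simps)+

lemma ntr_NResE [consumes 1, case_names tau vis]:
  assumes "NRes c M \<midarrow>\<delta>\<rightarrow> X"
  obtains (tau) p v M' where "\<delta> = Tau" "M \<midarrow>LOut p c v\<rightarrow> M'" "X = NRes c M'"
    | (vis) M' where "\<not> lab_has_chan \<delta> c" "M \<midarrow>\<delta>\<rightarrow> M'" "X = NRes c M'"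
  using assms by (cases rule: ntr.cases) auto

lemma ntr_NParE [consumes 1, case_names bcastL bcastR parL parR]:
  assumes "NPar M D N \<midarrow>\<delta>\<rightarrow> X"
  obtains (bcastL) p q a v M' N' where "\<delta> = LOut p a v" "M \<midarrow>LOut p a v\<rightarrow> M'"
      "N \<midarrow>LIn q a v\<rightarrow> N'" "(p,q) \<in> D \<or> (q,p) \<in> D" "X = NPar M' D N'"
    | (bcastR) p q a v M' N' where "\<delta> = LOut p a v" "N \<midarrow>LOut p a v\<rightarrow> N'"
      "M \<midarrow>LIn q a v\<rightarrow> M'" "(p,q) \<in> D \<or> (q,p) \<in> D" "X = NPar M' D N'"
    | (parL) M' where "M \<midarrow>\<delta>\<rightarrow> M'" "X = NPar M' D N"
    | (parR) N' where "N \<midarrow>\<delta>\<rightarrow> N'" "X = NPar M D N'"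
  using assms by (cases rule: ntr.cases) auto

lemma ntr_NRes_lab: "NRes c M \<midarrow>\<delta>\<rightarrow> X \<Longrightarrow> \<not> lab_has_chan \<delta> c"
  by (erule ntr_NResE) auto

lemma ptr_pocc_lab: "P \<midarrow>\<alpha>\<rightarrow>\<^sub>p P' \<Longrightarrow> \<alpha> = AOut c v \<or> \<alpha> = AIn c v \<Longrightarrow> pocc defs c P"
  by (induction rule: ptr.induct) (auto intro: pocc.intros)

lemma ptr_pocc: "P \<midarrow>\<alpha>\<rightarrow>\<^sub>p P' \<Longrightarrow> pocc defs a P' \<Longrightarrow> pocc defs a P"
  by (induction rule: ptr.induct) (auto intro: pocc.intros)

lemma ptr_pcallocc: "P \<midarrow>\<alpha>\<rightarrow>\<^sub>p P' \<Longrightarrow> pcallocc defs a P' \<Longrightarrow> pcallocc defs a P"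
  by (induction rule: ptr.induct) (auto dest: pcallocc_pocc ptr_pocc)

lemma ntr_nfree_lab: "M \<midarrow>\<delta>\<rightarrow> M' \<Longrightarrow> lab_has_chan \<delta> a \<Longrightarrow> nfree defs a M"
  by (induction rule: ntr.induct) (auto dest: ptr_pocc_lab)

lemma ntr_fresh_lab: "M \<midarrow>\<delta>\<rightarrow> M' \<Longrightarrow> \<not> nocc defs d M \<Longrightarrow> \<not> lab_has_chan \<delta> d"
  by (meson nfree_nocc ntr_nfree_lab)

lemma ntr_nfree: "M \<midarrow>\<delta>\<rightarrow> M' \<Longrightarrow> nfree defs a M' \<Longrightarrow> nfree defs a M"
  by (induction rule: ntr.induct) (auto split: if_splits dest: ptr_pocc)

lemma ntr_nocc: "M \<midarrow>\<delta>\<rightarrow> M' \<Longrightarrow> nocc defs a M' \<Longrightarrow> nocc defs a M"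
  by (induction rule: ntr.induct) (auto split: if_splits dest: ptr_pocc)

lemma ntr_ncallocc: "M \<midarrow>\<delta>\<rightarrow> M' \<Longrightarrow> ncallocc defs a M' \<Longrightarrow> ncallocc defs a M"
  by (induction rule: ntr.induct) (auto split: if_splits dest: ptr_pcallocc)

lemma ntr_locs: "M \<midarrow>\<delta>\<rightarrow> M' \<Longrightarrow> locs M' = locs M"
  by (induction rule: ntr.induct) auto

lemma ntr_wf_net: "M \<midarrow>\<delta>\<rightarrow> M' \<Longrightarrow> wf_net M \<Longrightarrow> wf_net M'"
  by (induction rule: ntr.induct) (auto simp: ntr_locs)

section \<open>Renaming a channel commutes with transitions\<close>

lemma ptr_fresh_pren:
  assumes "P \<midarrow>\<alpha>\<rightarrow>\<^sub>p P'" and "\<not> pocc defs c P"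
  shows "aren c d \<alpha> = \<alpha>" and "pren c d P' = P'"
proof -
  show "aren c d \<alpha> = \<alpha>" using assms by (cases \<alpha>) (auto simp: cren_def dest: ptr_pocc_lab)
  show "pren c d P' = P'" using assms by (meson pren_id ptr_pocc)
qed

lemma ptr_pren:
  "P \<midarrow>\<alpha>\<rightarrow>\<^sub>p P' \<Longrightarrow> \<not> pcallocc defs c P \<Longrightarrow> pren c d P \<midarrow>aren c d \<alpha>\<rightarrow>\<^sub>p pren c d P'"
proof (induction rule: ptr.induct)
  case (7 A vs \<alpha> P')
  then have "\<not> pocc defs c (defs A vs)" by simp
  with 7 show ?case by (simp add: ptr_fresh_pren[OF 7(1)])
qed (auto simp: cren_def)

lemma ptr_pren_inv:
  "pren c d P \<midarrow>\<alpha>\<rightarrow>\<^sub>p Q \<Longrightarrow> \<not> pcallocc defs c P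
   \<Longrightarrow> \<exists>\<alpha>0 P'. P \<midarrow>\<alpha>0\<rightarrow>\<^sub>p P' \<and> \<alpha> = aren c d \<alpha>0 \<and> Q = pren c d P'"
proof (induction P arbitrary: \<alpha> Q)
  case (PRecv a f)
  then obtain v where "\<alpha> = AIn (cren c d a) v" "Q = pren c d (f v)" by (auto simp: cren_def)
  then show ?case by (intro exI[of _ "AIn a v"] exI[of _ "f v"]) simp
next
  case (PSend a e P)
  then have "\<alpha> = AOut (cren c d a) (eval e)" "Q = pren c d P" by (auto simp: cren_def)
  then show ?case by (intro exI[of _ "AOut a (eval e)"] exI[of _ P]) simp
next
  case (PCall A vs)
  then have "defs A vs \<midarrow>\<alpha>\<rightarrow>\<^sub>p Q" "\<not> pocc defs c (defs A vs)" by simp_all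
  then show ?case using ptr_fresh_pren by fastforce
next
  case (PSum P1 P2)
  then show ?case by (simp; meson)
next
  case (PIf b P1 P2)
  then show ?case by (cases "evalb b") (simp; meson)+
qed simp

lemma ntr_nren:
  "M \<midarrow>\<delta>\<rightarrow> M' \<Longrightarrow> \<not> ncallocc defs c M \<Longrightarrow> \<not> nocc defs d M
   \<Longrightarrow> nren c d M \<midarrow>lren c d \<delta>\<rightarrow> nren c d M'"
proof (induction rule: ntr.induct)
  case (n_send p V \<Phi> a v P' E)
  then have "pren c d (\<Phi> p) \<midarrow>aren c d (AOut a v)\<rightarrow>\<^sub>p pren c d P'" by (intro ptr_pren) auto
  from ntr_NLeafI[where \<Phi> = "\<lambda>q. pren c d (\<Phi> q)", OF \<open>p \<in> V\<close> this, of E]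
  show ?case by (simp only: nren.simps lren.simps aren.simps loc_lab.simps pren_fun_upd)
next
  case (n_recv p V \<Phi> a v P' E)
  then have "pren c d (\<Phi> p) \<midarrow>aren c d (AIn a v)\<rightarrow>\<^sub>p pren c d P'" by (intro ptr_pren) auto
  from ntr_NLeafI[where \<Phi> = "\<lambda>q. pren c d (\<Phi> q)", OF \<open>p \<in> V\<close> this, of E]
  show ?case by (simp only: nren.simps lren.simps aren.simps loc_lab.simps pren_fun_upd)
next
  case (n_res1 M p a v M')
  then show ?case by (cases "a = c") (auto simp: cren_def intro: ntr.n_res1)
next
  case (n_res2 M \<delta> M' a)
  then show ?case by (cases "a = c") (auto simp: lren_id lab_has_chan_lren intro: ntr.n_res2)
qed (auto intro: ntr.intros)

definition nren_reflects :: "'c \<Rightarrow> 'c \<Rightarrow> ('l,'c,'v,'e,'b,'k) net \<Rightarrow> bool" where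
  "nren_reflects c d M \<longleftrightarrow> (\<forall>\<delta> Y. nren c d M \<midarrow>\<delta>\<rightarrow> Y \<longrightarrow>
     (\<exists>\<delta>0 M'. M \<midarrow>\<delta>0\<rightarrow> M' \<and> lren c d \<delta>0 = \<delta> \<and> nren c d M' = Y))"

lemma nren_reflects_NLeaf:
  assumes nocall: "\<not> ncallocc defs c (NLeaf V E \<Phi>)"
  shows "nren_reflects c d (NLeaf V E \<Phi>)"
  unfolding nren_reflects_def
proof (intro allI impI)
  fix \<delta> Y assume "nren c d (NLeaf V E \<Phi>) \<midarrow>\<delta>\<rightarrow> Y"
  then obtain p \<alpha> P' where p: "p \<in> V" and tr: "pren c d (\<Phi> p) \<midarrow>\<alpha>\<rightarrow>\<^sub>p P'"
    and \<delta>: "\<delta> = loc_lab p \<alpha>" and Y: "Y = NLeaf V E ((\<lambda>q. pren c d (\<Phi> q))(p := P'))"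
    by (auto elim: ntr_NLeafE)
  obtain \<alpha>0 P0 where "\<Phi> p \<midarrow>\<alpha>0\<rightarrow>\<^sub>p P0" "\<alpha> = aren c d \<alpha>0" "P' = pren c d P0"
    using ptr_pren_inv[OF tr] nocall p by auto
  then show "\<exists>\<delta>0 M'. NLeaf V E \<Phi> \<midarrow>\<delta>0\<rightarrow> M' \<and> lren c d \<delta>0 = \<delta> \<and> nren c d M' = Y"
    using ntr_NLeafI[OF p] \<delta> Y by (metis lren_loc_lab nren.simps(1) pren_fun_upd)
qed

lemma nren_reflects_NRes_same: "nren_reflects c d (NRes c M)"
  unfolding nren_reflects_def
proof (intro allI impI)
  fix \<delta> Y assume "nren c d (NRes c M) \<midarrow>\<delta>\<rightarrow> Y"
  then have tr: "NRes c M \<midarrow>\<delta>\<rightarrow> Y" by simp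
  then obtain M' where "Y = NRes c M'" by (auto elim: ntr_NResE)
  with tr show "\<exists>\<delta>0 M'. NRes c M \<midarrow>\<delta>0\<rightarrow> M' \<and> lren c d \<delta>0 = \<delta> \<and> nren c d M' = Y"
    by (metis lren_id ntr_NRes_lab nren.simps(2))
qed

lemma nren_reflects_NRes:
  assumes IH: "nren_reflects c d M" and "a \<noteq> c" and "a \<noteq> d"
  shows "nren_reflects c d (NRes a M)"
  unfolding nren_reflects_def
proof (intro allI impI)
  fix \<delta> Y assume "nren c d (NRes a M) \<midarrow>\<delta>\<rightarrow> Y"
  with \<open>a \<noteq> c\<close> have "NRes a (nren c d M) \<midarrow>\<delta>\<rightarrow> Y" by simp
  then show "\<exists>\<delta>0 M'. NRes a M \<midarrow>\<delta>0\<rightarrow> M' \<and> lren c d \<delta>0 = \<delta> \<and> nren c d M' = Y"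
  proof (cases rule: ntr_NResE)
    case (tau p v Y0)
    with IH obtain \<delta>0 M' where tr: "M \<midarrow>\<delta>0\<rightarrow> M'" and lab: "lren c d \<delta>0 = LOut p a v"
      and Y0: "nren c d M' = Y0"
      unfolding nren_reflects_def by blast
    from lab \<open>a \<noteq> c\<close> \<open>a \<noteq> d\<close> have "\<delta>0 = LOut p a v" by (cases \<delta>0) (auto simp: cren_def)
    with tr tau Y0 \<open>a \<noteq> c\<close> show ?thesis
      by (intro exI[of _ Tau] exI[of _ "NRes a M'"]) (auto intro: ntr.n_res1)
  next
    case (vis Y0)
    with IH obtain \<delta>0 M' where "M \<midarrow>\<delta>0\<rightarrow> M'" "lren c d \<delta>0 = \<delta>" "nren c d M' = Y0"
      unfolding nren_reflects_def by blast
    with vis \<open>a \<noteq> c\<close> \<open>a \<noteq> d\<close> show ?thesis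
      by (intro exI[of _ \<delta>0] exI[of _ "NRes a M'"]) (auto simp: lab_has_chan_lren intro: ntr.n_res2)
  qed
qed

lemma nren_reflects_NPar:
  assumes IH1: "nren_reflects c d M1" and IH2: "nren_reflects c d M2"
    and fresh1: "\<not> nocc defs d M1" and fresh2: "\<not> nocc defs d M2"
  shows "nren_reflects c d (NPar M1 D M2)"
  unfolding nren_reflects_def
proof (intro allI impI)
  fix \<delta> Y assume "nren c d (NPar M1 D M2) \<midarrow>\<delta>\<rightarrow> Y"
  then have "NPar (nren c d M1) D (nren c d M2) \<midarrow>\<delta>\<rightarrow> Y" by simp
  then show "\<exists>\<delta>0 M'. NPar M1 D M2 \<midarrow>\<delta>0\<rightarrow> M' \<and> lren c d \<delta>0 = \<delta> \<and> nren c d M' = Y"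
  proof (cases rule: ntr_NParE)
    case (bcastL p q a v Y1 Y2)
    obtain a1 M1' where 1: "M1 \<midarrow>LOut p a1 v\<rightarrow> M1'" "a = cren c d a1" "Y1 = nren c d M1'"
      using IH1 bcastL(2) unfolding nren_reflects_def by fastforce
    obtain a2 M2' where 2: "M2 \<midarrow>LIn q a2 v\<rightarrow> M2'" "a = cren c d a2" "Y2 = nren c d M2'"
      using IH2 bcastL(3) unfolding nren_reflects_def by fastforce
    have "a1 = a2"
      using 1 2 ntr_fresh_lab[OF 1(1) fresh1] ntr_fresh_lab[OF 2(1) fresh2] by (auto dest: cren_inj)
    with 1 2 bcastL show ?thesis
      by (intro exI[of _ "LOut p a1 v"] exI[of _ "NPar M1' D M2'"]) (auto intro: ntr.n_bcast1)
  next
    case (bcastR p q a v Y1 Y2)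
    obtain a1 M1' where 1: "M1 \<midarrow>LIn q a1 v\<rightarrow> M1'" "a = cren c d a1" "Y1 = nren c d M1'"
      using IH1 bcastR(3) unfolding nren_reflects_def by fastforce
    obtain a2 M2' where 2: "M2 \<midarrow>LOut p a2 v\<rightarrow> M2'" "a = cren c d a2" "Y2 = nren c d M2'"
      using IH2 bcastR(2) unfolding nren_reflects_def by fastforce
    have "a1 = a2"
      using 1 2 ntr_fresh_lab[OF 1(1) fresh1] ntr_fresh_lab[OF 2(1) fresh2] by (auto dest: cren_inj)
    with 1 2 bcastR show ?thesis
      by (intro exI[of _ "LOut p a2 v"] exI[of _ "NPar M1' D M2'"]) (auto intro: ntr.n_bcast2)
  next
    case (parL Y1)
    with IH1 show ?thesis unfolding nren_reflects_def by (fastforce intro: ntr.n_parL)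
  next
    case (parR Y2)
    with IH2 show ?thesis unfolding nren_reflects_def by (fastforce intro: ntr.n_parR)
  qed
qed

lemma nren_reflects: "\<not> ncallocc defs c M \<Longrightarrow> \<not> nocc defs d M \<Longrightarrow> nren_reflects c d M"
proof (induction M)
  case (NRes a M)
  then show ?case by (cases "a = c") (auto intro: nren_reflects_NRes_same nren_reflects_NRes)
qed (auto intro: nren_reflects_NLeaf nren_reflects_NPar)

section \<open>Structural congruence is a simulation up to itself\<close>

definition psim :: "('c,'v,'e,'b,'k) proc \<Rightarrow> ('c,'v,'e,'b,'k) proc \<Rightarrow> bool" where
  "psim P Q \<longleftrightarrow> (\<forall>\<alpha> P'. P \<midarrow>\<alpha>\<rightarrow>\<^sub>p P' \<longrightarrow> (\<exists>Q'. Q \<midarrow>\<alpha>\<rightarrow>\<^sub>p Q' \<and> P' \<cong>\<^sub>p Q'))"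

lemma pcong_psim: "P \<cong>\<^sub>p Q \<Longrightarrow> psim P Q \<and> psim Q P"
proof (induction rule: pcong.induct)
  case (ptrans P Q R)
  then show ?case unfolding psim_def by (meson pcong.ptrans)
next
  case (pctx_recv f g c)
  then show ?case by (auto simp: psim_def intro: pcong.psym)
next
  case (pctx_send P Q c e)
  then show ?case by (auto simp: psim_def intro: pcong.psym)
next
  case (pctx_sum P P' Q Q')
  then show ?case unfolding psim_def by (simp, meson)
next
  case (pctx_if P P' Q Q' b)
  then show ?case unfolding psim_def by (cases "evalb b") simp_all
qed (auto simp: psim_def intro: pcong.prefl)

definition nsim :: "('l,'c,'v,'e,'b,'k) net \<Rightarrow> ('l,'c,'v,'e,'b,'k) net \<Rightarrow> bool" where
  "nsim M N \<longleftrightarrow> (\<forall>\<delta> M'. M \<midarrow>\<delta>\<rightarrow> M' \<longrightarrow> (\<exists>N'. N \<midarrow>\<delta>\<rightarrow> N' \<and> M' \<cong> N'))"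

lemma nsimI: "(\<And>\<delta> M'. M \<midarrow>\<delta>\<rightarrow> M' \<Longrightarrow> \<exists>N'. N \<midarrow>\<delta>\<rightarrow> N' \<and> M' \<cong> N') \<Longrightarrow> nsim M N"
  unfolding nsim_def by blast

lemma nsimE:
  assumes "nsim M N" and "M \<midarrow>\<delta>\<rightarrow> M'"
  obtains N' where "N \<midarrow>\<delta>\<rightarrow> N'" and "M' \<cong> N'"
  using assms unfolding nsim_def by blast

lemma nsim_refl: "nsim M M"
  by (auto intro: nsimI ncong.nrefl)

lemma nsim_trans: "nsim M N \<Longrightarrow> nsim N K \<Longrightarrow> nsim M K"
  by (rule nsimI) (meson nsimE ncong.ntrans_cong)

lemma nsim_NLeaf:
  assumes cong: "\<And>p. p \<in> V \<Longrightarrow> \<Phi> p \<cong>\<^sub>p \<Psi> p"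
  shows "nsim (NLeaf V E \<Phi>) (NLeaf V E \<Psi>)"
proof (rule nsimI)
  fix \<delta> X assume "NLeaf V E \<Phi> \<midarrow>\<delta>\<rightarrow> X"
  then obtain p \<alpha> P' where p: "p \<in> V" and tr: "\<Phi> p \<midarrow>\<alpha>\<rightarrow>\<^sub>p P'"
    and \<delta>: "\<delta> = loc_lab p \<alpha>" and X: "X = NLeaf V E (\<Phi>(p := P'))"
    by (rule ntr_NLeafE)
  obtain Q' where "\<Psi> p \<midarrow>\<alpha>\<rightarrow>\<^sub>p Q'" and "P' \<cong>\<^sub>p Q'"
    using pcong_psim[OF cong[OF p]] tr unfolding psim_def by blast
  moreover from \<open>P' \<cong>\<^sub>p Q'\<close> have "X \<cong> NLeaf V E (\<Psi>(p := Q'))"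
    unfolding X using cong by (intro ncong.nctx_leaf) auto
  ultimately show "\<exists>Y. NLeaf V E \<Psi> \<midarrow>\<delta>\<rightarrow> Y \<and> X \<cong> Y"
    using ntr_NLeafI[OF p] \<delta> by blast
qed

lemma nsim_NRes:
  assumes sim: "nsim M N"
  shows "nsim (NRes c M) (NRes c N)"
proof (rule nsimI)
  fix \<delta> X assume "NRes c M \<midarrow>\<delta>\<rightarrow> X"
  then show "\<exists>Y. NRes c N \<midarrow>\<delta>\<rightarrow> Y \<and> X \<cong> Y"
  proof (cases rule: ntr_NResE)
    case (tau p v M')
    with sim obtain N' where "N \<midarrow>LOut p c v\<rightarrow> N'" "M' \<cong> N'" by (blast elim: nsimE)
    with tau show ?thesis by (blast intro: ntr.n_res1 ncong.nctx_res)
  next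
    case (vis M')
    with sim obtain N' where "N \<midarrow>\<delta>\<rightarrow> N'" "M' \<cong> N'" by (blast elim: nsimE)
    with vis show ?thesis by (blast intro: ntr.n_res2 ncong.nctx_res)
  qed
qed

lemma nsim_NPar:
  assumes simM: "nsim M M'" and simN: "nsim N N'" and congM: "M \<cong> M'" and congN: "N \<cong> N'"
  shows "nsim (NPar M D N) (NPar M' D N')"
proof (rule nsimI)
  fix \<delta> X assume "NPar M D N \<midarrow>\<delta>\<rightarrow> X"
  then show "\<exists>Y. NPar M' D N' \<midarrow>\<delta>\<rightarrow> Y \<and> X \<cong> Y"
  proof (cases rule: ntr_NParE)
    case (bcastL p q a v M1 N1)
    obtain M2 where "M' \<midarrow>LOut p a v\<rightarrow> M2" "M1 \<cong> M2" using simM bcastL(2) by (rule nsimE)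
    moreover obtain N2 where "N' \<midarrow>LIn q a v\<rightarrow> N2" "N1 \<cong> N2" using simN bcastL(3) by (rule nsimE)
    ultimately show ?thesis using bcastL by (blast intro: ntr.n_bcast1 ncong.nctx_par)
  next
    case (bcastR p q a v M1 N1)
    obtain M2 where "M' \<midarrow>LIn q a v\<rightarrow> M2" "M1 \<cong> M2" using simM bcastR(3) by (rule nsimE)
    moreover obtain N2 where "N' \<midarrow>LOut p a v\<rightarrow> N2" "N1 \<cong> N2" using simN bcastR(2) by (rule nsimE)
    ultimately show ?thesis using bcastR by (blast intro: ntr.n_bcast2 ncong.nctx_par)
  next
    case (parL M1)
    obtain M2 where "M' \<midarrow>\<delta>\<rightarrow> M2" "M1 \<cong> M2" using simM parL(1) by (rule nsimE)
    with parL congN show ?thesis by (blast intro: ntr.n_parL ncong.nctx_par)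
  next
    case (parR N1)
    obtain N2 where "N' \<midarrow>\<delta>\<rightarrow> N2" "N1 \<cong> N2" using simN parR(1) by (rule nsimE)
    with parR congM show ?thesis by (blast intro: ntr.n_parR ncong.nctx_par)
  qed
qed

lemma ntr_nalpha:
  "M \<midarrow>\<delta>\<rightarrow> M' \<Longrightarrow> \<not> nocc defs d M \<Longrightarrow> \<not> ncallocc defs c M \<Longrightarrow> NRes c M' \<cong> NRes d (nren c d M')"
  by (intro ncong.nalpha) (auto dest: ntr_nocc ntr_ncallocc)

lemma nsim_alpha:
  assumes fresh: "\<not> nocc defs d M" and nocall: "\<not> ncallocc defs c M"
  shows "nsim (NRes c M) (NRes d (nren c d M))"
proof (rule nsimI)
  fix \<delta> X assume "NRes c M \<midarrow>\<delta>\<rightarrow> X"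
  then show "\<exists>Y. NRes d (nren c d M) \<midarrow>\<delta>\<rightarrow> Y \<and> X \<cong> Y"
  proof (cases rule: ntr_NResE)
    case (tau p v M')
    from ntr_nren[OF tau(2) nocall fresh] have "nren c d M \<midarrow>LOut p d v\<rightarrow> nren c d M'"
      by (simp add: cren_def)
    with tau show ?thesis using ntr_nalpha[OF tau(2) fresh nocall] by (blast intro: ntr.n_res1)
  next
    case (vis M')
    from ntr_nren[OF vis(2) nocall fresh] vis(1) have "nren c d M \<midarrow>\<delta>\<rightarrow> nren c d M'"
      by (simp add: lren_id)
    moreover have "\<not> lab_has_chan \<delta> d" using ntr_fresh_lab[OF vis(2) fresh] .
    ultimately show ?thesis using vis ntr_nalpha[OF vis(2) fresh nocall] by (blast intro: ntr.n_res2)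
  qed
qed

lemma nsim_alpha_inv:
  assumes fresh: "\<not> nocc defs d M" and nocall: "\<not> ncallocc defs c M"
  shows "nsim (NRes d (nren c d M)) (NRes c M)"
proof (rule nsimI)
  fix \<delta> Y assume "NRes d (nren c d M) \<midarrow>\<delta>\<rightarrow> Y"
  then show "\<exists>X. NRes c M \<midarrow>\<delta>\<rightarrow> X \<and> Y \<cong> X"
  proof (cases rule: ntr_NResE)
    case (tau p v Y0)
    obtain \<delta>0 M' where tr: "M \<midarrow>\<delta>0\<rightarrow> M'" and lab: "lren c d \<delta>0 = LOut p d v" and Y0: "nren c d M' = Y0"
      using nren_reflects[OF nocall fresh] tau(2) unfolding nren_reflects_def by blast
    from lab ntr_fresh_lab[OF tr fresh] have "\<delta>0 = LOut p c v"
      by (cases \<delta>0) (auto simp: cren_def split: if_splits)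
    with tr have "NRes c M \<midarrow>Tau\<rightarrow> NRes c M'" by (blast intro: ntr.n_res1)
    with tau Y0 show ?thesis using ntr_nalpha[OF tr fresh nocall] by (blast intro: ncong.nsym)
  next
    case (vis Y0)
    obtain \<delta>0 M' where tr: "M \<midarrow>\<delta>0\<rightarrow> M'" and lab: "lren c d \<delta>0 = \<delta>" and Y0: "nren c d M' = Y0"
      using nren_reflects[OF nocall fresh] vis(2) unfolding nren_reflects_def by blast
    from lab vis(1) have "\<not> lab_has_chan \<delta>0 c" by (cases \<delta>0) (auto simp: cren_def)
    with lab have "\<delta>0 = \<delta>" by (simp add: lren_id)
    with tr \<open>\<not> lab_has_chan \<delta>0 c\<close> have "NRes c M \<midarrow>\<delta>\<rightarrow> NRes c M'" by (blast intro: ntr.n_res2)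
    with vis Y0 show ?thesis using ntr_nalpha[OF tr fresh nocall] by (blast intro: ncong.nsym)
  qed
qed

lemma nsim_res_comm: "nsim (NRes c (NRes d M)) (NRes d (NRes c M))"
proof (cases "c = d")
  case True
  then show ?thesis by (simp add: nsim_refl)
next
  case False
  show ?thesis
  proof (rule nsimI)
    fix \<delta> X assume "NRes c (NRes d M) \<midarrow>\<delta>\<rightarrow> X"
    then show "\<exists>Y. NRes d (NRes c M) \<midarrow>\<delta>\<rightarrow> Y \<and> X \<cong> Y"
    proof (cases rule: ntr_NResE)
      case (tau p v X1)
      from tau(2) obtain M' where tr: "M \<midarrow>LOut p c v\<rightarrow> M'" and X1: "X1 = NRes d M'"
        by (cases rule: ntr_NResE) auto
      from ntr.n_res1[OF tr] have "NRes d (NRes c M) \<midarrow>Tau\<rightarrow> NRes d (NRes c M')"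
        by (rule ntr.n_res2) simp
      moreover have "X \<cong> NRes d (NRes c M')" unfolding tau(3) X1 by (rule ncong.nres_comm)
      ultimately show ?thesis using tau(1) by blast
    next
      case (vis X1)
      from vis(2) obtain M' where X1: "X1 = NRes d M'" and
        "NRes d (NRes c M) \<midarrow>\<delta>\<rightarrow> NRes d (NRes c M')"
      proof (cases rule: ntr_NResE)
        case (tau p v M')
        with False have "NRes c M \<midarrow>LOut p d v\<rightarrow> NRes c M'" by (auto intro: ntr.n_res2)
        with tau that show ?thesis by (auto intro: ntr.n_res1)
      next
        case inner: (vis M')
        with vis(1) that show ?thesis by (auto intro: ntr.n_res2)
      qed
      moreover have "X \<cong> NRes d (NRes c M')" unfolding vis(3) X1 by (rule ncong.nres_comm)
      ultimately show ?thesis by blast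
    qed
  qed
qed

lemma nsim_par_comm: "nsim (NPar M D N) (NPar N D M)"
proof (rule nsimI)
  fix \<delta> X assume tr: "NPar M D N \<midarrow>\<delta>\<rightarrow> X"
  then obtain M' N' where X: "X = NPar M' D N'" by (cases rule: ntr_NParE) auto
  from tr have "NPar N D M \<midarrow>\<delta>\<rightarrow> NPar N' D M'"
    unfolding X by (cases rule: ntr_NParE) (auto intro: ntr.intros)
  moreover have "X \<cong> NPar N' D M'" unfolding X by (rule ncong.npar_comm)
  ultimately show "\<exists>Y. NPar N D M \<midarrow>\<delta>\<rightarrow> Y \<and> X \<cong> Y" by blast
qed

lemma nsim_extrude:
  assumes nf: "\<not> nfree defs c M"
  shows "nsim (NRes c (NPar M D N)) (NPar M D (NRes c N))"
proof (rule nsimI)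
  fix \<delta> X assume "NRes c (NPar M D N) \<midarrow>\<delta>\<rightarrow> X"
  then show "\<exists>Y. NPar M D (NRes c N) \<midarrow>\<delta>\<rightarrow> Y \<and> X \<cong> Y"
  proof (cases rule: ntr_NResE)
    case (tau p v Y)
    from tau(2) nf obtain N' where "N \<midarrow>LOut p c v\<rightarrow> N'" "Y = NPar M D N'"
      by (cases rule: ntr_NParE) (auto dest: ntr_nfree_lab)
    with tau nf show ?thesis by (blast intro: ntr.n_parR ntr.n_res1 ncong.nextrude)
  next
    case (vis Y)
    from vis(2) show ?thesis
    proof (cases rule: ntr_NParE)
      case (bcastL p q a v M' N')
      then have "NRes c N \<midarrow>LIn q a v\<rightarrow> NRes c N'" using vis(1) by (auto intro: ntr.n_res2)
      moreover have "\<not> nfree defs c M'" using bcastL(2) nf ntr_nfree by blast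
      ultimately show ?thesis using vis bcastL by (blast intro: ntr.n_bcast1 ncong.nextrude)
    next
      case (bcastR p q a v M' N')
      then have "NRes c N \<midarrow>LOut p a v\<rightarrow> NRes c N'" using vis(1) by (auto intro: ntr.n_res2)
      moreover have "\<not> nfree defs c M'" using bcastR(3) nf ntr_nfree by blast
      ultimately show ?thesis using vis bcastR by (blast intro: ntr.n_bcast2 ncong.nextrude)
    next
      case (parL M')
      moreover have "\<not> nfree defs c M'" using parL(1) nf ntr_nfree by blast
      ultimately show ?thesis using vis by (blast intro: ntr.n_parL ncong.nextrude)
    next
      case (parR N')
      with vis nf show ?thesis by (blast intro: ntr.n_parR ntr.n_res2 ncong.nextrude)
    qed
  qed
qed

lemma nsim_extrude_inv:
  assumes nf: "\<not> nfree defs c M"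
  shows "nsim (NPar M D (NRes c N)) (NRes c (NPar M D N))"
proof (rule nsimI)
  have extrude: "NPar M' D (NRes c N') \<cong> NRes c (NPar M' D N')" if "\<not> nfree defs c M'" for M' N'
    using that by (rule ncong.nextrude[THEN ncong.nsym])
  fix \<delta> X assume "NPar M D (NRes c N) \<midarrow>\<delta>\<rightarrow> X"
  then show "\<exists>Y. NRes c (NPar M D N) \<midarrow>\<delta>\<rightarrow> Y \<and> X \<cong> Y"
  proof (cases rule: ntr_NParE)
    case (bcastL p q a v M' N1)
    from bcastL(3) obtain N' where "a \<noteq> c" "N \<midarrow>LIn q a v\<rightarrow> N'" "N1 = NRes c N'"
      by (cases rule: ntr_NResE) auto
    with bcastL have "NRes c (NPar M D N) \<midarrow>\<delta>\<rightarrow> NRes c (NPar M' D N')"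
      by (auto intro: ntr.n_res2 ntr.n_bcast1)
    moreover have "X \<cong> NRes c (NPar M' D N')"
      using bcastL(2) nf ntr_nfree \<open>N1 = NRes c N'\<close> bcastL(5) extrude by blast
    ultimately show ?thesis by blast
  next
    case (bcastR p q a v M' N1)
    from bcastR(2) obtain N' where "a \<noteq> c" "N \<midarrow>LOut p a v\<rightarrow> N'" "N1 = NRes c N'"
      by (cases rule: ntr_NResE) auto
    with bcastR have "NRes c (NPar M D N) \<midarrow>\<delta>\<rightarrow> NRes c (NPar M' D N')"
      by (auto intro: ntr.n_res2 ntr.n_bcast2)
    moreover have "X \<cong> NRes c (NPar M' D N')"
      using bcastR(3) nf ntr_nfree \<open>N1 = NRes c N'\<close> bcastR(5) extrude by blast
    ultimately show ?thesis by blast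
  next
    case (parL M')
    have "\<not> lab_has_chan \<delta> c" using parL(1) nf ntr_nfree_lab by blast
    with parL(1) have "NRes c (NPar M D N) \<midarrow>\<delta>\<rightarrow> NRes c (NPar M' D N)"
      by (intro ntr.n_res2 ntr.n_parL)
    moreover have "X \<cong> NRes c (NPar M' D N)"
      using parL nf ntr_nfree extrude by blast
    ultimately show ?thesis by blast
  next
    case (parR N1)
    from parR(1) obtain N' where "NRes c (NPar M D N) \<midarrow>\<delta>\<rightarrow> NRes c (NPar M D N')" "N1 = NRes c N'"
    proof (cases rule: ntr_NResE)
      case (tau p v N')
      with that show ?thesis by (auto intro: ntr.n_res1 ntr.n_parR)
    next
      case (vis N')
      with that show ?thesis by (auto intro: ntr.n_res2 ntr.n_parR)
    qed
    moreover have "X \<cong> NRes c (NPar M D N')" using parR(2) \<open>N1 = NRes c N'\<close> nf extrude by blast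
    ultimately show ?thesis by blast
  qed
qed

lemma ncong_nsim: "M \<cong> N \<Longrightarrow> nsim M N \<and> nsim N M"
proof (induction rule: ncong.induct)
  case (ntrans_cong M N K)
  then show ?case by (blast intro: nsim_trans)
next
  case (nctx_leaf V \<Phi> \<Psi> E)
  then show ?case by (blast intro: nsim_NLeaf pcong.psym)
next
  case (nctx_par M M' N N' D)
  then show ?case by (blast intro: nsim_NPar ncong.nsym)
qed (simp_all add: nsim_refl nsim_alpha nsim_alpha_inv nsim_res_comm nsim_par_comm nsim_extrude
       nsim_extrude_inv nsim_NRes)

end

theorem lemma3:
  fixes eval :: "'e \<Rightarrow> 'v" and evalb :: "'b \<Rightarrow> bool"
    and defs :: "('c,'v,'e,'b,'k) cdefs"
    and M M' N :: "('l::countable,'c,'v,'e,'b,'k) net" and \<delta> :: "('l,'c,'v) lab"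
  assumes "wf_net M" and "wf_net M'" and "wf_net N"
    and "ntr eval evalb defs M \<delta> M'"
    and "ncong evalb defs M N"
  shows "\<exists>N'. wf_net N' \<and> ntr eval evalb defs N \<delta> N' \<and> ncong evalb defs M' N'"
proof -
  have "nsim eval evalb defs M N" using ncong_nsim[OF assms(5)] by blast
  then obtain N' where "ntr eval evalb defs N \<delta> N'" and "ncong evalb defs M' N'"
    using assms(4) by (rule nsimE)
  moreover from this(1) have "wf_net N'" using assms(3) by (rule ntr_wf_net)
  ultimately show ?thesis by blast
qed

end
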